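(* Every singular point $K'=(\mathbf{k}'_1,\dots,\mathbf{k}'_6)$ of the singularity variety $V=0$ corresponds to one of the following configurations: (1) the three legs are collinear, i.e. all six points $\mathbf{k}'_1,\dots,\mathbf{k}'_6$ lie on a common line; (2) two legs are collinear and one leg degenerates to a point, i.e. for some permutation $(i,j,l)$ of $(1,2,3)$ one has $\mathbf{k}'_l=\mathbf{k}'_{l+3}$ and $\mathbf{k}'_i,\mathbf{k}'_{i+3},\mathbf{k}'_j,\mathbf{k}'_{j+3}$ lie on a common line; (3) two legs degenerate to points, i.e. $\mathbf{k}'_i=\mathbf{k}'_{i+3}$ and $\mathbf{k}'_j=\mathbf{k}'_{j+3}$ for some distinct $i,j\in\{1,2,3\}$; (4) one leg degenerates to a point and the carrier lines of the remaining two legs pass through that point, i.e. for some permutation $(i,j,l)$ of $(1,2,3)$ one has $\mathbf{k}'_l=\mathbf{k}'_{l+3}=:\mathbf{q}$, the points $\mathbf{q},\mathbf{k}'_i,\mathbf{k}'_{i+3}$ lie on a common line and the points $\mathbf{q},\mathbf{k}'_j,\mathbf{k}'_{j+3}$ lie on a common line.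
   Context: A configuration is $K'=(\mathbf{k}'_1,\dots,\mathbf{k}'_6)$ with $\mathbf{k}'_i=(c_i,d_i)^T\in\mathbb{R}^2$, viewed as a point of $\mathbb{R}^{12}$; $\mathbf{k}'_1,\mathbf{k}'_2,\mathbf{k}'_3$ are base anchor points, $\mathbf{k}'_4,\mathbf{k}'_5,\mathbf{k}'_6$ platform anchor points, and the $i$-th leg ($i=1,2,3$) joins $\mathbf{k}'_i$ and $\mathbf{k}'_{i+3}$; its carrier line is the line through these two points. The singularity polynomial is $V(K')=\det\mathbf{V}(K')$, where $\mathbf{V}(K')$ is the $3\times3$ matrix whose $i$-th column ($i=1,2,3$) consists of the two coordinates of $\mathbf{k}'_{i+3}-\mathbf{k}'_i$ followed by $\det(\mathbf{k}'_i,\mathbf{k}'_{i+3}-\mathbf{k}'_i)$. A singular point of $V=0$ is a point of $\mathbb{R}^{12}$ where $V$ and all its partial derivatives with respect to $c_1,\dots,c_6,d_1,\dots,d_6$ vanish. *)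

theory Defs
  imports "HOL-Analysis.Analysis"
begin

text \<open>A configuration K' = (k'_1,...,k'_6), k'_i = (c_i, d_i), is given by two
coordinate functions c d :: nat => real, of which only the indices 1..6 matter.\<close>

definition pt :: "(nat \<Rightarrow> real) \<Rightarrow> (nat \<Rightarrow> real) \<Rightarrow> nat \<Rightarrow> real \<times> real" where
  "pt c d i = (c i, d i)"

definition det3 :: "real \<Rightarrow> real \<Rightarrow> real \<Rightarrow> real \<Rightarrow> real \<Rightarrow> real \<Rightarrow> real \<Rightarrow> real \<Rightarrow> real \<Rightarrow> real" where
  "det3 a1 a2 a3 b1 b2 b3 e1 e2 e3 =
     a1 * (b2 * e3 - b3 * e2) - b1 * (a2 * e3 - a3 * e2) + e1 * (a2 * b3 - a3 * b2)"

text \<open>Entries of the i-th column of V(K'): the coordinates of k'_{i+3} - k'_i, followed by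
det(k'_i, k'_{i+3} - k'_i).\<close>
definition colx :: "(nat \<Rightarrow> real) \<Rightarrow> (nat \<Rightarrow> real) \<Rightarrow> nat \<Rightarrow> real" where
  "colx c d i = c (i + 3) - c i"
definition coly :: "(nat \<Rightarrow> real) \<Rightarrow> (nat \<Rightarrow> real) \<Rightarrow> nat \<Rightarrow> real" where
  "coly c d i = d (i + 3) - d i"
definition colz :: "(nat \<Rightarrow> real) \<Rightarrow> (nat \<Rightarrow> real) \<Rightarrow> nat \<Rightarrow> real" where
  "colz c d i = c i * (d (i + 3) - d i) - d i * (c (i + 3) - c i)"

definition Vpoly :: "(nat \<Rightarrow> real) \<Rightarrow> (nat \<Rightarrow> real) \<Rightarrow> real" where
  "Vpoly c d = det3 (colx c d 1) (coly c d 1) (colz c d 1)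
                    (colx c d 2) (coly c d 2) (colz c d 2)
                    (colx c d 3) (coly c d 3) (colz c d 3)"

definition singular_point :: "(nat \<Rightarrow> real) \<Rightarrow> (nat \<Rightarrow> real) \<Rightarrow> bool" where
  "singular_point c d \<longleftrightarrow> Vpoly c d = 0 \<and>
     (\<forall>k\<in>{1..6}. ((\<lambda>t. Vpoly (c(k := t)) d) has_real_derivative 0) (at (c k))) \<and>
     (\<forall>k\<in>{1..6}. ((\<lambda>t. Vpoly c (d(k := t))) has_real_derivative 0) (at (d k)))"

end

theory Submission
  imports Defs
begin

text \<open>Column i of V(K') holds the Pluecker coordinates v_i of the carrier line of leg i,
so V = v_i . (v_j x v_k) for every cyclic order (i, j, k). In the anchor coordinates of leg i
alone this is affine in each variable, and its four partial derivatives vanish exactly when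
v_j x v_k = n_3 (d_i, -c_i, 1) and n_3 (k'_(i+3) - k'_i) = 0. So either n_3 = 0, and then
v_j x v_k = 0 puts legs j and k on one line, or leg i degenerates to the point k'_i, which is
then the intersection point v_j x v_k of the carrier lines of legs j and k. Sorting by the
number of degenerate legs gives the four configurations.\<close>

lemma collinear_if_line_equation:
  fixes S :: "(real \<times> real) set"
  assumes ab: "(a, b) \<noteq> (0, 0)" and line: "\<And>p. p \<in> S \<Longrightarrow> fst p * b - snd p * a = m"
  shows "collinear S"
  unfolding collinear_def
proof (rule exI[of _ "(a, b)"], intro ballI)
  fix p q assume "p \<in> S" "q \<in> S"
  define w1 w2 where "w1 = fst (p - q)" and "w2 = snd (p - q)"
  have w: "w1 * b = w2 * a" using line \<open>p \<in> S\<close> \<open>q \<in> S\<close> unfolding w1_def w2_def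
    by (simp add: algebra_simps)
  have N: "a * a + b * b \<noteq> 0" using ab by (simp add: sum_squares_eq_zero_iff)
  define t where "t = (w1 * a + w2 * b) / (a * a + b * b)"
  have "w1 * (a * a + b * b) = (w1 * a + w2 * b) * a" "w2 * (a * a + b * b) = (w1 * a + w2 * b) * b"
    using w by algebra+
  then have "w1 = t * a" "w2 = t * b" using N unfolding t_def by (simp_all add: field_simps)
  then have "p - q = t *\<^sub>R (a, b)" unfolding w1_def w2_def by (simp add: prod_eq_iff)
  then show "\<exists>t. p - q = t *\<^sub>R (a, b)" ..
qed

text \<open>The inner product of (n1, n2, n3) with the column of V(K') of a leg from (a, b) to (a', b').\<close>
definition leg_pairing :: "real \<Rightarrow> real \<Rightarrow> real \<Rightarrow> real \<Rightarrow> real \<Rightarrow> real \<Rightarrow> real \<Rightarrow> real" where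
  "leg_pairing n1 n2 n3 a b a' b' =
     (a' - a) * n1 + (b' - b) * n2 + (a * (b' - b) - b * (a' - a)) * n3"

lemma leg_pairing_critical:
  assumes "((\<lambda>t. leg_pairing n1 n2 n3 t b a' b') has_real_derivative 0) (at a)"
    and "((\<lambda>t. leg_pairing n1 n2 n3 a t a' b') has_real_derivative 0) (at b)"
    and "((\<lambda>t. leg_pairing n1 n2 n3 a b t b') has_real_derivative 0) (at a')"
    and "((\<lambda>t. leg_pairing n1 n2 n3 a b a' t) has_real_derivative 0) (at b')"
  shows "n1 = n3 * b" "n2 = - n3 * a" "n3 * (a' - a) = 0" "n3 * (b' - b) = 0"
proof -
  have "((\<lambda>t. leg_pairing n1 n2 n3 t b a' b') has_real_derivative n3 * b' - n1) (at a)"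
    and "((\<lambda>t. leg_pairing n1 n2 n3 a t a' b') has_real_derivative - n3 * a' - n2) (at b)"
    and "((\<lambda>t. leg_pairing n1 n2 n3 a b t b') has_real_derivative n1 - n3 * b) (at a')"
    and "((\<lambda>t. leg_pairing n1 n2 n3 a b a' t) has_real_derivative n2 + n3 * a) (at b')"
    unfolding leg_pairing_def by (auto intro!: derivative_eq_intros simp: algebra_simps)
  then have "n3 * b' - n1 = 0" "- n3 * a' - n2 = 0" "n1 - n3 * b = 0" "n2 + n3 * a = 0"
    using assms DERIV_unique by blast+
  then show "n1 = n3 * b" "n2 = - n3 * a" "n3 * (a' - a) = 0" "n3 * (b' - b) = 0"
    unfolding right_diff_distrib mult_minus_left by linarith+
qed

definition cyclic3 :: "nat \<Rightarrow> nat \<Rightarrow> nat \<Rightarrow> bool" where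
  "cyclic3 i j k \<longleftrightarrow> (i, j, k) \<in> {(1, 2, 3), (2, 3, 1), (3, 1, 2)}"

lemma cyclic3_cases:
  obtains (none) "\<And>i. i \<in> {1, 2, 3} \<Longrightarrow> \<not> P i"
  | (two) i j where "i \<in> {1, 2, 3}" "j \<in> {1, 2, 3}" "i \<noteq> j" "P i" "P j"
  | (one) l i j where "cyclic3 l i j" "P l" "\<not> P i" "\<not> P j"
proof -
  have "cyclic3 1 2 3" "cyclic3 2 3 1" "cyclic3 3 1 2" by (simp_all add: cyclic3_def)
  moreover have "(1::nat) \<in> {1, 2, 3}" "(2::nat) \<in> {1, 2, 3}" "(3::nat) \<in> {1, 2, 3}"
    "(1::nat) \<noteq> 2" "(1::nat) \<noteq> 3" "(2::nat) \<noteq> 3" by simp_all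
  ultimately show ?thesis
    using none two one by (smt (verit) insert_iff singletonD)
qed

lemma cyclic3_set: "cyclic3 l i j \<Longrightarrow> {i, j, l} = {1, 2, 3}"
  by (auto simp: cyclic3_def)

definition cross_x :: "(nat \<Rightarrow> real) \<Rightarrow> (nat \<Rightarrow> real) \<Rightarrow> nat \<Rightarrow> nat \<Rightarrow> real" where
  "cross_x c d j k = coly c d j * colz c d k - colz c d j * coly c d k"
definition cross_y :: "(nat \<Rightarrow> real) \<Rightarrow> (nat \<Rightarrow> real) \<Rightarrow> nat \<Rightarrow> nat \<Rightarrow> real" where
  "cross_y c d j k = colz c d j * colx c d k - colx c d j * colz c d k"
definition cross_z :: "(nat \<Rightarrow> real) \<Rightarrow> (nat \<Rightarrow> real) \<Rightarrow> nat \<Rightarrow> nat \<Rightarrow> real" where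
  "cross_z c d j k = colx c d j * coly c d k - coly c d j * colx c d k"

lemma Vpoly_eq_leg_pairing:
  assumes "cyclic3 i j k"
  shows "Vpoly c d = leg_pairing (cross_x c d j k) (cross_y c d j k) (cross_z c d j k)
                       (c i) (d i) (c (i + 3)) (d (i + 3))"
  using assms unfolding cyclic3_def
  by (auto simp: Vpoly_def det3_def leg_pairing_def cross_x_def cross_y_def cross_z_def
      colx_def coly_def colz_def algebra_simps)

lemma cross_cols_fun_upd:
  assumes "m \<notin> {j, j + 3, k, k + 3}"
  shows "cross_x (c(m := t)) d j k = cross_x c d j k" "cross_x c (d(m := t)) j k = cross_x c d j k"
    and "cross_y (c(m := t)) d j k = cross_y c d j k" "cross_y c (d(m := t)) j k = cross_y c d j k"
    and "cross_z (c(m := t)) d j k = cross_z c d j k" "cross_z c (d(m := t)) j k = cross_z c d j k"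
  using assms by (auto simp: cross_x_def cross_y_def cross_z_def colx_def coly_def colz_def)

lemma singular_point_cross_cols:
  assumes sp: "singular_point c d" and ijk: "cyclic3 i j k"
  shows "cross_x c d j k = cross_z c d j k * d i" "cross_y c d j k = - cross_z c d j k * c i"
    and "cross_z c d j k * colx c d i = 0" "cross_z c d j k * coly c d i = 0"
proof -
  let ?P = "leg_pairing (cross_x c d j k) (cross_y c d j k) (cross_z c d j k)"
  have other: "i \<notin> {j, j + 3, k, k + 3}" "i + 3 \<notin> {j, j + 3, k, k + 3}"
    and range: "i \<in> {1..6}" "i + 3 \<in> {1..6}"
    using ijk by (auto simp: cyclic3_def)
  have V: "Vpoly (c(i := t)) d = ?P t (d i) (c (i + 3)) (d (i + 3))"
    "Vpoly c (d(i := t)) = ?P (c i) t (c (i + 3)) (d (i + 3))"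
    "Vpoly (c(i + 3 := t)) d = ?P (c i) (d i) t (d (i + 3))"
    "Vpoly c (d(i + 3 := t)) = ?P (c i) (d i) (c (i + 3)) t" for t
    using Vpoly_eq_leg_pairing[OF ijk] cross_cols_fun_upd[OF other(1)]
      cross_cols_fun_upd[OF other(2)] by simp_all
  have D: "((\<lambda>t. Vpoly (c(m := t)) d) has_real_derivative 0) (at (c m))"
    "((\<lambda>t. Vpoly c (d(m := t))) has_real_derivative 0) (at (d m))" if "m \<in> {1..6}" for m
    using sp that unfolding singular_point_def by blast+
  from D[OF range(1)] D[OF range(2)] have
    "((\<lambda>t. ?P t (d i) (c (i + 3)) (d (i + 3))) has_real_derivative 0) (at (c i))"
    "((\<lambda>t. ?P (c i) t (c (i + 3)) (d (i + 3))) has_real_derivative 0) (at (d i))"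
    "((\<lambda>t. ?P (c i) (d i) t (d (i + 3))) has_real_derivative 0) (at (c (i + 3)))"
    "((\<lambda>t. ?P (c i) (d i) (c (i + 3)) t) has_real_derivative 0) (at (d (i + 3)))"
    unfolding V .
  from leg_pairing_critical[OF this] show
    "cross_x c d j k = cross_z c d j k * d i" "cross_y c d j k = - cross_z c d j k * c i"
    "cross_z c d j k * colx c d i = 0" "cross_z c d j k * coly c d i = 0"
    by (simp_all only: colx_def coly_def)
qed

text \<open>When leg i is a point, this holds for every p.\<close>
definition on_carrier :: "(nat \<Rightarrow> real) \<Rightarrow> (nat \<Rightarrow> real) \<Rightarrow> nat \<Rightarrow> real \<times> real \<Rightarrow> bool" where
  "on_carrier c d i p \<longleftrightarrow> fst p * coly c d i - snd p * colx c d i = colz c d i"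

lemma pt_eq_iff_col_0: "pt c d i = pt c d (i + 3) \<longleftrightarrow> colx c d i = 0 \<and> coly c d i = 0"
  by (auto simp: pt_def colx_def coly_def)

lemma on_carrier_anchors: "on_carrier c d i (pt c d i)" "on_carrier c d i (pt c d (i + 3))"
  by (simp_all add: on_carrier_def pt_def colx_def coly_def colz_def algebra_simps)

lemma collinear_if_on_carrier:
  assumes "pt c d i \<noteq> pt c d (i + 3)" and "\<And>p. p \<in> S \<Longrightarrow> on_carrier c d i p"
  shows "collinear S"
  using assms collinear_if_line_equation[of "colx c d i" "coly c d i" S "colz c d i"]
  by (auto simp: on_carrier_def pt_eq_iff_col_0)

lemma on_carrier_if_cross_cols_0:
  assumes "cross_x c d j k = 0" "cross_y c d j k = 0" "cross_z c d j k = 0"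
    and "pt c d k \<noteq> pt c d (k + 3)" and "on_carrier c d k p"
  shows "on_carrier c d j p"
proof -
  let ?e = "fst p * coly c d j - snd p * colx c d j - colz c d j"
  have "?e * colx c d k = 0" "?e * coly c d k = 0"
    using assms(1-3,5) unfolding cross_x_def cross_y_def cross_z_def on_carrier_def by algebra+
  with assms(4) show ?thesis by (auto simp: on_carrier_def pt_eq_iff_col_0)
qed

lemma on_carrier_if_cross_cols_point:
  assumes "cross_x c d j k = cross_z c d j k * snd q" "cross_y c d j k = - cross_z c d j k * fst q"
    and "cross_z c d j k \<noteq> 0"
  shows "on_carrier c d j q" "on_carrier c d k q"
proof -
  have "cross_z c d j k * (fst q * coly c d j - snd q * colx c d j - colz c d j) = 0"
    "cross_z c d j k * (fst q * coly c d k - snd q * colx c d k - colz c d k) = 0"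
    using assms(1,2) unfolding cross_x_def cross_y_def cross_z_def by algebra+
  with assms(3) show "on_carrier c d j q" "on_carrier c d k q" by (simp_all add: on_carrier_def)
qed

lemma singular_point_cross_cols_0:
  assumes "singular_point c d" and "cyclic3 i j k" and "pt c d i \<noteq> pt c d (i + 3)"
  shows "cross_x c d j k = 0" "cross_y c d j k = 0" "cross_z c d j k = 0"
proof -
  show z: "cross_z c d j k = 0"
    using singular_point_cross_cols(3,4)[OF assms(1,2)] assms(3) by (auto simp: pt_eq_iff_col_0)
  then show "cross_x c d j k = 0" "cross_y c d j k = 0"
    using singular_point_cross_cols(1,2)[OF assms(1,2)] by simp_all
qed

lemma collinear_if_no_leg_degenerate:
  assumes sp: "singular_point c d" and proper: "\<And>i. i \<in> {1, 2, 3} \<Longrightarrow> pt c d i \<noteq> pt c d (i + 3)"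
  shows "collinear {pt c d 1, pt c d 2, pt c d 3, pt c d 4, pt c d 5, pt c d 6}"
proof -
  have transfer: "on_carrier c d j p" if ijk: "cyclic3 i j k" and "on_carrier c d k p" for i j k p
  proof -
    have "i \<in> {1, 2, 3}" "k \<in> {1, 2, 3}" using ijk by (auto simp: cyclic3_def)
    with singular_point_cross_cols_0[OF sp ijk] proper show ?thesis
      using on_carrier_if_cross_cols_0 \<open>on_carrier c d k p\<close> by blast
  qed
  have "on_carrier c d 3 p" if "on_carrier c d 1 p" for p
    using transfer[of 2 3 1] that by (simp add: cyclic3_def)
  moreover have "on_carrier c d 1 p" if "on_carrier c d 2 p" for p
    using transfer[of 3 1 2] that by (simp add: cyclic3_def)
  ultimately have "on_carrier c d 3 p" if "p \<in> {pt c d 1, pt c d 2, pt c d 3, pt c d 4, pt c d 5, pt c d 6}" for p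
    using that on_carrier_anchors[of c d 1] on_carrier_anchors[of c d 2] on_carrier_anchors[of c d 3]
    by simp blast
  with proper[of 3] show ?thesis by (intro collinear_if_on_carrier[of c d 3]) auto
qed

lemma singular_point_one_leg_degenerate:
  assumes sp: "singular_point c d" and lij: "cyclic3 l i j"
    and proper: "pt c d i \<noteq> pt c d (i + 3)" "pt c d j \<noteq> pt c d (j + 3)"
  shows "collinear {pt c d i, pt c d (i + 3), pt c d j, pt c d (j + 3)} \<or>
    (collinear {pt c d l, pt c d i, pt c d (i + 3)} \<and> collinear {pt c d l, pt c d j, pt c d (j + 3)})"
proof (cases "cross_z c d i j = 0")
  case True
  with singular_point_cross_cols(1,2)[OF sp lij]
  have "on_carrier c d i p" if "on_carrier c d j p" for p
    using on_carrier_if_cross_cols_0[OF _ _ True proper(2) that] by simp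
  then have "collinear {pt c d i, pt c d (i + 3), pt c d j, pt c d (j + 3)}"
    by (intro collinear_if_on_carrier[OF proper(1)]) (use on_carrier_anchors in blast)
  then show ?thesis ..
next
  case False
  with singular_point_cross_cols(1,2)[OF sp lij]
  have "on_carrier c d i (pt c d l)" "on_carrier c d j (pt c d l)"
    using on_carrier_if_cross_cols_point[of c d i j "pt c d l"] by (simp_all add: pt_def)
  then have "collinear {pt c d l, pt c d i, pt c d (i + 3)}" "collinear {pt c d l, pt c d j, pt c d (j + 3)}"
    by (intro collinear_if_on_carrier[OF proper(1)] collinear_if_on_carrier[OF proper(2)];
        use on_carrier_anchors in blast)+
  then show ?thesis by blast
qed

theorem theorem4:
  fixes c d :: "nat \<Rightarrow> real"
  assumes "singular_point c d"
  shows "collinear {pt c d 1, pt c d 2, pt c d 3, pt c d 4, pt c d 5, pt c d 6}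
    \<or> (\<exists>i j l. {i, j, l} = {1, 2, 3} \<and> pt c d l = pt c d (l + 3) \<and>
          collinear {pt c d i, pt c d (i + 3), pt c d j, pt c d (j + 3)})
    \<or> (\<exists>i j. i \<in> {1, 2, 3} \<and> j \<in> {1, 2, 3} \<and> i \<noteq> j \<and>
          pt c d i = pt c d (i + 3) \<and> pt c d j = pt c d (j + 3))
    \<or> (\<exists>i j l. {i, j, l} = {1, 2, 3} \<and> pt c d l = pt c d (l + 3) \<and>
          collinear {pt c d l, pt c d i, pt c d (i + 3)} \<and>
          collinear {pt c d l, pt c d j, pt c d (j + 3)})"
proof (cases rule: cyclic3_cases[of "\<lambda>i. pt c d i = pt c d (i + 3)"])
  case none
  from collinear_if_no_leg_degenerate[OF assms this] show ?thesis ..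
next
  case (two i j)
  then show ?thesis by blast
next
  case (one l i j)
  from singular_point_one_leg_degenerate[OF assms one(1,3,4)] cyclic3_set[OF one(1)] one(2)
  show ?thesis by (smt (verit))
qed

end
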